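(* Let $P\in S^n$. Then, with respect to the Pompeiu-Hausdorff metric $h$: (1) the map $\bigcirc_{{\rm Wulff},P}:\mathcal{H}_{\rm Wulff}(S^n,P)\to\mathcal{H}_{\rm Wulff}(S^n,P)$, $W\mapsto W^\circ$, is a well-defined bijective isometry, i.e. $h(W_1^\circ,W_2^\circ)=h(W_1,W_2)$ for all $W_1,W_2\in\mathcal{H}_{\rm Wulff}(S^n,P)$; (2) the map $\overline{\bigcirc_{{\rm Wulff},P}}:\overline{\mathcal{H}_{\rm Wulff}(S^n,P)}\to\overline{\mathcal{H}_{\rm Wulff}(S^n,P)}$, $W\mapsto W^\circ$, is a well-defined bijective isometry, i.e. $h(W_1^\circ,W_2^\circ)=h(W_1,W_2)$ for all $W_1,W_2\in\overline{\mathcal{H}_{\rm Wulff}(S^n,P)}$.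
   Context: $n$ is a positive integer and $S^n$ is the unit sphere in $\mathbb{R}^{n+1}$. For $P,Q\in S^n$, $|PQ|=\arccos(P\cdot Q)$ is the spherical (geodesic) distance; $S^n$ is regarded as a metric space with this distance. For $P\in S^n$, $H(P)=\{Q\in S^n: P\cdot Q\ge 0\}$. For a non-empty $W\subset S^n$, its spherical polar set is $W^\circ=\bigcap_{P\in W}H(P)$. $\mathcal{H}(S^n)$ is the set of non-empty closed subsets of $S^n$ with the Pompeiu-Hausdorff metric $h(A,B)=\max\{\max_{x\in A}\min_{y\in B}|xy|,\ \max_{y\in B}\min_{x\in A}|xy|\}$. A subset $W\subset S^n$ is hemispherical if there is $P\in S^n$ with $W\cap H(P)=\emptyset$. For $P,Q$ in a hemispherical set $W$, the arc $PQ=\{((1-t)P+tQ)/\|(1-t)P+tQ\|: 0\le t\le 1\}$. A hemispherical $W$ is spherical convex if $PQ\subset W$ for all $P,Q\in W$; it is a spherical convex body if it is moreover closed and has an interior point. For $P\in S^n$, $\mathcal{H}_{\rm Wulff}(S^n,P)$ is the set of $W\in\mathcal{H}(S^n)$ such that $W\cap H(-P)=\emptyset$, $P$ is an interior point of $W$, and $W$ is a spherical convex body; $\overline{\mathcal{H}_{\rm Wulff}(S^n,P)}$ is its closure in $(\mathcal{H}(S^n),h)$. *)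

theory Defs
  imports "HOL-Analysis.Analysis"
begin

text \<open>The unit sphere S^n in R^(n+1), modelled in a Euclidean space 'a with DIM('a) = n+1.\<close>
definition sph :: "'a::euclidean_space set" where
  "sph = {x. norm x = 1}"

definition sdist :: "'a::euclidean_space \<Rightarrow> 'a \<Rightarrow> real" where
  "sdist P Q = arccos (P \<bullet> Q)"

definition hemi :: "'a::euclidean_space \<Rightarrow> 'a set" where
  "hemi P = {Q \<in> sph. P \<bullet> Q \<ge> 0}"

definition spolar :: "'a::euclidean_space set \<Rightarrow> 'a set" where
  "spolar W = sph \<inter> (\<Inter>P\<in>W. hemi P)"

definition Hsets :: "'a::euclidean_space set set" where
  "Hsets = {A. A \<subseteq> sph \<and> closed A \<and> A \<noteq> {}}"

text \<open>Pompeiu-Hausdorff distance w.r.t. the spherical distance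
  (for non-empty compact sets the Sup/Inf are attained max/min).\<close>
definition hdist :: "'a::euclidean_space set \<Rightarrow> 'a set \<Rightarrow> real" where
  "hdist A B = max (SUP x\<in>A. INF y\<in>B. sdist x y) (SUP y\<in>B. INF x\<in>A. sdist x y)"

definition hemispherical :: "'a::euclidean_space set \<Rightarrow> bool" where
  "hemispherical W \<longleftrightarrow> W \<subseteq> sph \<and> (\<exists>P\<in>sph. W \<inter> hemi P = {})"

definition sarc :: "'a::euclidean_space \<Rightarrow> 'a \<Rightarrow> 'a set" where
  "sarc P Q = {((1 - t) *\<^sub>R P + t *\<^sub>R Q) /\<^sub>R norm ((1 - t) *\<^sub>R P + t *\<^sub>R Q) | t. 0 \<le> t \<and> t \<le> 1}"

definition sconvex :: "'a::euclidean_space set \<Rightarrow> bool" where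
  "sconvex W \<longleftrightarrow> hemispherical W \<and> (\<forall>P\<in>W. \<forall>Q\<in>W. sarc P Q \<subseteq> W)"

definition sinterior_pt :: "'a::euclidean_space set \<Rightarrow> 'a \<Rightarrow> bool" where
  "sinterior_pt W P \<longleftrightarrow> P \<in> W \<and> (\<exists>e>0. {Q \<in> sph. sdist P Q < e} \<subseteq> W)"

definition sconvex_body :: "'a::euclidean_space set \<Rightarrow> bool" where
  "sconvex_body W \<longleftrightarrow> sconvex W \<and> closed W \<and> (\<exists>P. sinterior_pt W P)"

definition HWulff :: "'a::euclidean_space \<Rightarrow> 'a set set" where
  "HWulff P = {W \<in> Hsets. W \<inter> hemi (- P) = {} \<and> sinterior_pt W P \<and> sconvex_body W}"

definition HWulff_closure :: "'a::euclidean_space \<Rightarrow> 'a set set" where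
  "HWulff_closure P = {W \<in> Hsets. \<forall>e>0. \<exists>V\<in>HWulff P. hdist W V < e}"

end

theory Submission
  imports Defs
begin

text \<open>
  Both statements reduce to one inequality: for closed sets A, B of the sphere that contain P,
  lie in the hemisphere H(P) and equal their own bipolars, the excess of the polar of A over the
  polar of B is at most the excess of B over A. Given Q in the polar of A and h slightly above that
  excess, every point of B is within angle pi/2 + h of Q, i.e. has inner product at least
  -sin h with Q; projecting Q onto the polar cone of B then yields a point of the polar of B at
  angle at most h from Q (for h \<ge> pi/2 the common point P serves). Applying the inequality twice,
  once to the polars, gives the isometry.

  Wulff shapes are bipolar because their cones are closed convex cones (separating hyperplane
  theorem); sets in the closure are bipolar because the cones of Hausdorff limits of convex sets
  are again convex. That polarity preserves both classes follows from the isometry and from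
  elementary properties of the polar of a Wulff shape.
\<close>

subsection \<open>Spherical distance\<close>

lemma inner_sph_bounds:
  assumes "x \<in> sph" "y \<in> sph"
  shows "-1 \<le> x \<bullet> y" "x \<bullet> y \<le> 1"
proof -
  have "\<bar>x \<bullet> y\<bar> \<le> norm x * norm y" by (rule Cauchy_Schwarz_ineq2)
  then show "-1 \<le> x \<bullet> y" "x \<bullet> y \<le> 1" using assms by (auto simp: sph_def)
qed

lemma inner_self_sph: "x \<in> sph \<Longrightarrow> x \<bullet> x = 1"
  by (simp add: sph_def dot_square_norm)

lemma sgn_sph: "x \<in> sph \<Longrightarrow> sgn x = x"
  by (simp add: sph_def sgn_div_norm)

lemma sgn_in_sph: "x \<noteq> 0 \<Longrightarrow> sgn x \<in> sph"
  by (simp add: sph_def norm_sgn)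

lemma closed_sph: "closed (sph :: 'a::euclidean_space set)"
proof -
  have e: "sph = sphere (0::'a) 1" by (auto simp: sph_def)
  show ?thesis unfolding e by (rule closed_sphere)
qed

lemma compact_sph_subset:
  fixes W :: "'a::euclidean_space set"
  assumes "W \<subseteq> sph" "closed W"
  shows "compact W"
proof -
  have "W \<subseteq> cball 0 1" using assms(1) by (auto simp: sph_def)
  then show ?thesis using assms(2) bounded_subset[OF bounded_cball] compact_eq_bounded_closed by blast
qed

lemma sdist_bounds:
  assumes "x \<in> sph" "y \<in> sph"
  shows "0 \<le> sdist x y" "sdist x y \<le> pi"
  using inner_sph_bounds[OF assms] by (auto simp: sdist_def intro: arccos_lbound arccos_ubound)

lemma cos_sdist: "x \<in> sph \<Longrightarrow> y \<in> sph \<Longrightarrow> cos (sdist x y) = x \<bullet> y"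
  using inner_sph_bounds[of x y] by (simp add: sdist_def)

lemma sdist_commute: "sdist x y = sdist y x"
  by (simp add: sdist_def inner_commute)

lemma sdist_le_pi_half:
  assumes "x \<in> sph" "y \<in> sph" "0 \<le> x \<bullet> y"
  shows "sdist x y \<le> pi/2"
proof -
  have "arccos (x \<bullet> y) \<le> arccos 0"
    using inner_sph_bounds[OF assms(1,2)] assms(3) by (intro arccos_le_arccos) auto
  then show ?thesis by (simp add: sdist_def)
qed

lemma sdist_le_iff_cos_le:
  assumes "x \<in> sph" "y \<in> sph" "0 \<le> h" "h \<le> pi"
  shows "sdist x y \<le> h \<longleftrightarrow> cos h \<le> x \<bullet> y"
proof -
  have "sdist x y \<le> h \<longleftrightarrow> cos h \<le> cos (sdist x y)"
    using sdist_bounds[OF assms(1,2)] assms(3,4) by (intro cos_mono_le_eq[symmetric]) auto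
  then show ?thesis by (simp add: cos_sdist assms)
qed

lemma norm_diff_le_sdist:
  assumes "x \<in> sph" "y \<in> sph"
  shows "norm (x - y) \<le> sdist x y"
proof -
  define t where "t = sdist x y"
  have "(norm (x - y))\<^sup>2 = 2 - 2 * cos (2 * (t/2))"
    using cos_sdist[OF assms] inner_self_sph[OF assms(1)] inner_self_sph[OF assms(2)]
    by (simp add: t_def power2_norm_eq_inner inner_diff_left inner_diff_right inner_commute)
  also have "\<dots> = (2 * sin (t/2))\<^sup>2" by (simp only: cos_double_sin) (simp add: power_mult_distrib)
  also have "\<dots> \<le> t\<^sup>2"
    using abs_sin_x_le_abs_x[of "t/2"] abs_le_square_iff by (fastforce simp: power_mult_distrib)
  finally show ?thesis
    using sdist_bounds[OF assms] unfolding t_def by (metis power2_le_imp_le)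
qed

lemma sdist_triangle:
  assumes x: "x \<in> sph" and y: "y \<in> sph" and z: "z \<in> sph"
  shows "sdist x z \<le> sdist x y + sdist y z"
proof (cases "sdist x y + sdist y z \<ge> pi")
  case True then show ?thesis using sdist_bounds[OF x z] by linarith
next
  case False
  define a b where "a = x \<bullet> y" and "b = y \<bullet> z"
  have ab: "\<bar>a\<bar> \<le> 1" "\<bar>b\<bar> \<le> 1" using inner_sph_bounds x y z a_def b_def by (auto simp: abs_le_iff)
  txt \<open>Cauchy-Schwarz for the components of x and z orthogonal to y.\<close>
  define u v where "u = x - a *\<^sub>R y" and "v = z - b *\<^sub>R y"
  note unit = inner_self_sph[OF x] inner_self_sph[OF y] inner_self_sph[OF z]
  have "u \<bullet> u = 1 - a\<^sup>2" "v \<bullet> v = 1 - b\<^sup>2"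
    by (simp_all add: u_def v_def a_def b_def unit inner_diff_left inner_diff_right inner_commute
        power2_eq_square)
  then have nuv: "norm u = sqrt (1 - a\<^sup>2)" "norm v = sqrt (1 - b\<^sup>2)"
    by (simp_all add: norm_eq_sqrt_inner)
  have "u \<bullet> v = x \<bullet> z - a * b"
    by (simp add: u_def v_def a_def b_def unit inner_diff_left inner_diff_right inner_commute)
  moreover have "- (norm u * norm v) \<le> u \<bullet> v"
    using Cauchy_Schwarz_ineq2[of u v] by linarith
  moreover have "cos (arccos a + arccos b) = a * b - sqrt (1 - a\<^sup>2) * sqrt (1 - b\<^sup>2)"
    using ab by (simp add: cos_add sin_arccos)
  ultimately have "cos (sdist x y + sdist y z) \<le> x \<bullet> z"
    by (simp add: sdist_def a_def b_def nuv)
  moreover have "0 \<le> sdist x y + sdist y z"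
    using sdist_bounds[OF x y] sdist_bounds[OF y z] by simp
  ultimately show ?thesis
    using sdist_le_iff_cos_le[OF x z] False by simp
qed

subsection \<open>Excess of one subset of the sphere over another\<close>

definition hexcess :: "'a::euclidean_space set \<Rightarrow> 'a set \<Rightarrow> real" where
  "hexcess A B = (SUP x\<in>A. INF y\<in>B. sdist x y)"

lemma hdist_hexcess: "hdist A B = max (hexcess A B) (hexcess B A)"
  by (simp add: hdist_def hexcess_def sdist_commute)

lemma INF_sdist_bounds:
  assumes "B \<subseteq> sph" "B \<noteq> {}" "x \<in> sph"
  shows "bdd_below ((\<lambda>y. sdist x y) ` B)" "0 \<le> (INF y\<in>B. sdist x y)"
    "(INF y\<in>B. sdist x y) \<le> pi"
proof -
  show bdd: "bdd_below ((\<lambda>y. sdist x y) ` B)"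
    using assms sdist_bounds by (intro bdd_belowI2[of _ 0]) blast
  show "0 \<le> (INF y\<in>B. sdist x y)"
    using assms sdist_bounds by (intro cINF_greatest) blast+
  obtain y where "y \<in> B" using assms by blast
  then show "(INF y\<in>B. sdist x y) \<le> pi"
    using assms sdist_bounds bdd by (intro cINF_lower2[where x=y]) blast+
qed

lemma bdd_above_INF_sdist:
  assumes "A \<subseteq> sph" "B \<subseteq> sph" "B \<noteq> {}"
  shows "bdd_above ((\<lambda>x. INF y\<in>B. sdist x y) ` A)"
  using INF_sdist_bounds(3)[OF assms(2,3)] assms(1) by (intro bdd_aboveI2[where M=pi]) blast

lemma hexcess_nonneg:
  assumes "A \<subseteq> sph" "B \<subseteq> sph" "A \<noteq> {}" "B \<noteq> {}"
  shows "0 \<le> hexcess A B"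
proof -
  obtain x where x: "x \<in> A" using assms by blast
  have "0 \<le> (INF y\<in>B. sdist x y)" using INF_sdist_bounds(2)[OF assms(2,4)] x assms(1) by blast
  also have "\<dots> \<le> hexcess A B"
    unfolding hexcess_def using x bdd_above_INF_sdist[OF assms(1,2,4)] by (rule cSUP_upper)
  finally show ?thesis .
qed

lemma hexcess_le:
  assumes "A \<subseteq> sph" "B \<subseteq> sph" "A \<noteq> {}" "B \<noteq> {}"
    and near: "\<And>x e. x \<in> A \<Longrightarrow> e > 0 \<Longrightarrow> \<exists>y\<in>B. sdist x y < d + e"
  shows "hexcess A B \<le> d"
  unfolding hexcess_def
proof (rule cSUP_least)
  fix x assume x: "x \<in> A"
  have "x \<in> sph" using x assms(1) by blast
  then have bdd: "bdd_below ((\<lambda>y. sdist x y) ` B)" by (rule INF_sdist_bounds(1)[OF assms(2,4)])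
  show "(INF y\<in>B. sdist x y) \<le> d"
  proof (rule ccontr)
    assume "\<not> ?thesis"
    then obtain y where "y \<in> B" "sdist x y < (INF y\<in>B. sdist x y)"
      using near[OF x, of "(INF y\<in>B. sdist x y) - d"] by auto
    then show False using cINF_lower[OF bdd] by fastforce
  qed
qed (use assms in simp)

lemma hexcess_less_imp:
  assumes "A \<subseteq> sph" "B \<subseteq> sph" "B \<noteq> {}" "x \<in> A" "hexcess A B < d"
  shows "\<exists>y\<in>B. sdist x y < d"
proof -
  have "(INF y\<in>B. sdist x y) \<le> hexcess A B"
    unfolding hexcess_def using assms(4) bdd_above_INF_sdist[OF assms(1-3)] by (rule cSUP_upper)
  then have "(INF y\<in>B. sdist x y) < d" using assms(5) by simp
  then show ?thesis
    using cINF_less_iff[OF assms(3) INF_sdist_bounds(1)[OF assms(2,3)]] assms(1,4) by blast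
qed

lemma hdist_less_imp:
  assumes "A \<subseteq> sph" "B \<subseteq> sph" "A \<noteq> {}" "B \<noteq> {}" "hdist A B < d"
  shows "\<forall>x\<in>A. \<exists>y\<in>B. sdist x y < d" "\<forall>y\<in>B. \<exists>x\<in>A. sdist x y < d"
  using hexcess_less_imp[OF assms(1,2,4)] hexcess_less_imp[OF assms(2,1,3)] assms(5)
  by (auto simp: hdist_hexcess sdist_commute)

subsection \<open>Spherical polar sets\<close>

lemma spolar_iff: "Q \<in> spolar W \<longleftrightarrow> Q \<in> sph \<and> (\<forall>w\<in>W. 0 \<le> w \<bullet> Q)"
  by (auto simp: spolar_def hemi_def)

lemma spolar_subset_sph: "spolar W \<subseteq> sph"
  by (auto simp: spolar_iff)

lemma subset_spolar_spolar:
  assumes "W \<subseteq> sph" shows "W \<subseteq> spolar (spolar W)"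
proof
  fix x assume x: "x \<in> W"
  have "\<forall>w\<in>spolar W. 0 \<le> w \<bullet> x" using x by (simp add: spolar_iff inner_commute)
  then show "x \<in> spolar (spolar W)" using x assms by (auto simp: spolar_iff)
qed

lemma spolar_antimono: "V \<subseteq> W \<Longrightarrow> spolar W \<subseteq> spolar V"
  unfolding subset_iff spolar_iff by blast

lemma spolar_spolar_spolar: "W \<subseteq> sph \<Longrightarrow> spolar (spolar (spolar W)) = spolar W"
  by (meson antisym spolar_antimono spolar_subset_sph subset_spolar_spolar)

lemma closed_spolar: "closed (spolar W)"
proof -
  have "spolar W = sph \<inter> (\<Inter>w\<in>W. {Q. 0 \<le> w \<bullet> Q})" by (auto simp: spolar_iff)
  then show ?thesis
    using closed_sph closed_halfspace_ge[of 0] by (auto intro!: closed_Int closed_INT)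
qed

lemma convex_cone_closest_point:
  fixes X :: "'a::euclidean_space"
  assumes "convex_cone C" "closed C"
  obtains p where "p \<in> C" "(X - p) \<bullet> p = 0" "\<And>q. q \<in> C \<Longrightarrow> (X - p) \<bullet> q \<le> 0"
proof
  define p where "p = closest_point C X"
  have C: "convex C" "C \<noteq> {}" using assms(1) by (auto simp: convex_cone_def)
  show p: "p \<in> C" unfolding p_def using assms(2) C(2) by (rule closest_point_in_set)
  have dot: "(X - p) \<bullet> (y - p) \<le> 0" if "y \<in> C" for y
    using any_closest_point_dot[OF C(1) assms(2) p that] closest_point_exists(2)[OF assms(2) C(2)]
    by (simp add: p_def)
  have "(X - p) \<bullet> (0 - p) \<le> 0" "(X - p) \<bullet> (2 *\<^sub>R p - p) \<le> 0"
    using dot convex_cone_contains_0 convex_cone_scaleR assms(1) p by (metis zero_le_numeral)+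
  then show "(X - p) \<bullet> p = 0" by (simp add: algebra_simps)
  fix q assume "q \<in> C"
  then show "(X - p) \<bullet> q \<le> 0" using dot[of "p + q"] convex_cone_add[OF assms(1) p] by simp
qed

text \<open>The witness is the normalised projection of X onto the polar cone of B.\<close>

lemma spolar_inner_ge_cos:
  assumes bip: "spolar (spolar B) = B" and X: "X \<in> sph" and h: "0 \<le> h" "h < pi/2"
    and near: "\<And>b. b \<in> B \<Longrightarrow> - sin h \<le> X \<bullet> b"
  shows "\<exists>Q\<in>spolar B. cos h \<le> X \<bullet> Q"
proof -
  define C where "C = (\<Inter>b\<in>B. {q. 0 \<le> b \<bullet> q})"
  have "convex_cone C" "closed C"
    unfolding C_def convex_cone_iff by (auto simp: inner_add_right closed_INT
        closed_halfspace_ge[of 0, simplified])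
  then obtain p where p: "p \<in> C" "(X - p) \<bullet> p = 0" and r: "\<And>q. q \<in> C \<Longrightarrow> (X - p) \<bullet> q \<le> 0"
    using convex_cone_closest_point by blast
  define r where "r = X - p"
  have X_eq: "X = p + r" and pr: "p \<bullet> r = 0" using p(2) by (simp_all add: r_def inner_commute)
  have spolar_C: "spolar B = sph \<inter> C" by (auto simp: C_def spolar_iff)
  have "norm r \<le> sin h"
  proof (cases "r = 0")
    case False
    have "- sgn r \<in> sph" using False by (simp add: sph_def norm_sgn)
    moreover have "0 \<le> Q \<bullet> - sgn r" if "Q \<in> spolar B" for Q
      using r[of Q] that False
      by (auto simp: spolar_C r_def sgn_div_norm inner_commute mult_nonneg_nonpos)
    ultimately have "- sgn r \<in> spolar (spolar B)" by (simp add: spolar_iff)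
    then have "- sin h \<le> X \<bullet> - sgn r" using near[of "- sgn r"] bip by simp
    also have "X \<bullet> - sgn r = - (r \<bullet> r) / norm r"
      by (simp add: X_eq pr sgn_div_norm inner_add_left divide_inverse mult.commute)
    also have "\<dots> = - norm r"
      using False by (simp add: dot_square_norm power2_eq_square)
    finally show ?thesis by simp
  qed (use h pi_half_less_two in \<open>simp add: sin_ge_zero\<close>)
  have "(norm p)\<^sup>2 + (norm r)\<^sup>2 = 1"
    using inner_self_sph[OF X] pr
    by (simp add: X_eq power2_norm_eq_inner inner_add_left inner_add_right inner_commute)
  moreover have "(norm r)\<^sup>2 \<le> (sin h)\<^sup>2" using \<open>norm r \<le> sin h\<close> by (simp add: power_mono)
  ultimately have "(cos h)\<^sup>2 \<le> (norm p)\<^sup>2" by (simp add: cos_squared_eq)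
  then have cos_le: "cos h \<le> norm p" using norm_ge_zero power2_le_imp_le by blast
  moreover have "0 < cos h" using h by (intro cos_gt_zero_pi) auto
  ultimately have "p \<noteq> 0" by auto
  have "X \<bullet> sgn p = (p \<bullet> p) / norm p"
    using pr by (simp add: X_eq sgn_div_norm inner_add_left inner_commute[of r p] divide_inverse
        mult.commute)
  also have "\<dots> = norm p"
    using \<open>p \<noteq> 0\<close> by (simp add: dot_square_norm power2_eq_square)
  finally have "X \<bullet> sgn p = norm p" .
  moreover have "sgn p \<in> spolar B"
    using p(1) sgn_in_sph[OF \<open>p \<noteq> 0\<close>] by (auto simp: spolar_C C_def sgn_div_norm)
  ultimately show ?thesis using cos_le by (intro bexI[where x="sgn p"]) simp_all
qed

subsection \<open>Polarity as an isometry\<close>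

lemma spolar_approx:
  assumes A: "A \<subseteq> sph" and B: "B \<subseteq> sph" and P: "P \<in> A" "P \<in> spolar B"
    and bip: "spolar (spolar B) = B" and d: "0 \<le> d"
    and near: "\<And>b e. b \<in> B \<Longrightarrow> e > 0 \<Longrightarrow> \<exists>a\<in>A. sdist b a < d + e"
    and Q: "Q \<in> spolar A" and e: "e > 0"
  shows "\<exists>Q'\<in>spolar B. sdist Q Q' < d + e"
proof -
  define h where "h = d + e/2"
  have h: "0 \<le> h" "h < d + e" using d e by (simp_all add: h_def)
  have Qs: "Q \<in> sph" using Q by (simp add: spolar_iff)
  have near_Q: "sdist Q a \<le> pi/2" if "a \<in> A" for a
    using that Q A Qs by (intro sdist_le_pi_half) (auto simp: spolar_iff inner_commute)
  show ?thesis
  proof (cases "pi/2 \<le> h")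
    case True
    then have "sdist Q P < d + e" using near_Q[OF P(1)] h by linarith
    then show ?thesis using P(2) by blast
  next
    case False
    have "- sin h \<le> Q \<bullet> b" if b: "b \<in> B" for b
    proof -
      have bs: "b \<in> sph" using b B by blast
      obtain a where a: "a \<in> A" "sdist b a < h" using near[OF b, of "e/2"] e by (auto simp: h_def)
      then have "sdist Q b \<le> pi/2 + h"
        using sdist_triangle[OF Qs _ bs, of a] near_Q[OF a(1)] A by (auto simp: sdist_commute)
      then show ?thesis
        using sdist_le_iff_cos_le[OF Qs bs, of "pi/2 + h"] False h by (simp add: cos_add)
    qed
    then obtain Q' where Q': "Q' \<in> spolar B" "cos h \<le> Q \<bullet> Q'"
      using spolar_inner_ge_cos[OF bip Qs h(1)] False by auto
    then have "sdist Q Q' \<le> h"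
      using sdist_le_iff_cos_le[OF Qs spolar_subset_sph[THEN subsetD, OF Q'(1)]] h False by simp
    then have "sdist Q Q' < d + e" using h(2) by linarith
    then show ?thesis using Q'(1) by blast
  qed
qed

lemma hexcess_spolar_le:
  assumes A: "A \<subseteq> sph" "A \<noteq> {}" and B: "B \<subseteq> sph" "B \<noteq> {}"
    and P: "P \<in> A" "P \<in> spolar A" "P \<in> spolar B" and bip: "spolar (spolar B) = B"
  shows "hexcess (spolar A) (spolar B) \<le> hexcess B A"
proof (rule hexcess_le)
  show "spolar A \<noteq> {}" "spolar B \<noteq> {}" using P by auto
  fix Q e assume "Q \<in> spolar A" "(e::real) > 0"
  moreover have "\<exists>a\<in>A. sdist b a < hexcess B A + e" if "b \<in> B" "e > 0" for b e
    using hexcess_less_imp[OF B(1) A(1,2) that(1)] that(2) by simp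
  ultimately show "\<exists>Q'\<in>spolar B. sdist Q Q' < hexcess B A + e"
    using spolar_approx[OF A(1) B(1) P(1,3) bip hexcess_nonneg[OF B(1) A(1) B(2) A(2)]] by blast
qed (use spolar_subset_sph in auto)

definition pointed_bipolar :: "'a::euclidean_space \<Rightarrow> 'a set set" where
  "pointed_bipolar P = {W. W \<subseteq> sph \<and> P \<in> W \<and> P \<in> spolar W \<and> spolar (spolar W) = W}"

lemma spolar_pointed_bipolar:
  "W \<in> pointed_bipolar P \<Longrightarrow> spolar W \<in> pointed_bipolar P"
  by (simp add: pointed_bipolar_def spolar_subset_sph spolar_spolar_spolar)

lemma hdist_spolar_le:
  assumes "A \<in> pointed_bipolar P" "B \<in> pointed_bipolar P"
  shows "hdist (spolar A) (spolar B) \<le> hdist A B"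
proof -
  have A: "A \<subseteq> sph" "A \<noteq> {}" "P \<in> A" "P \<in> spolar A" "spolar (spolar A) = A"
    and B: "B \<subseteq> sph" "B \<noteq> {}" "P \<in> B" "P \<in> spolar B" "spolar (spolar B) = B"
    using assms by (auto simp: pointed_bipolar_def)
  show ?thesis
    using hexcess_spolar_le[OF A(1,2) B(1,2) A(3,4) B(4,5)] hexcess_spolar_le[OF B(1,2) A(1,2) B(3,4) A(4,5)]
    by (auto simp: hdist_hexcess)
qed

lemma hdist_spolar:
  assumes "A \<in> pointed_bipolar P" "B \<in> pointed_bipolar P"
  shows "hdist (spolar A) (spolar B) = hdist A B"
  using hdist_spolar_le[OF assms] hdist_spolar_le[OF assms[THEN spolar_pointed_bipolar]] assms
  by (simp add: pointed_bipolar_def)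

lemma bij_betw_spolar:
  assumes "S \<subseteq> pointed_bipolar P" "\<And>W. W \<in> S \<Longrightarrow> spolar W \<in> S"
  shows "bij_betw spolar S S"
  using assms by (intro bij_betw_byWitness[where f'=spolar]) (auto simp: pointed_bipolar_def)

subsection \<open>The cone over a subset of the sphere\<close>

definition cone_over :: "'a::euclidean_space set \<Rightarrow> 'a set" where
  "cone_over W = {x. x = 0 \<or> sgn x \<in> W}"

lemma sgn_scaleR_pos: "0 < t \<Longrightarrow> sgn (t *\<^sub>R x) = sgn x"
  for x :: "'a::real_normed_vector"
  by (simp add: sgn_scaleR)

lemma cone_cone_over: "cone (cone_over W)"
  by (auto simp: cone_def cone_over_def sgn_scaleR_pos less_eq_real_def)

lemma convex_cone_over_iff:
  "convex (cone_over W) \<longleftrightarrow> (\<forall>x\<in>cone_over W. \<forall>y\<in>cone_over W. x + y \<in> cone_over W)"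
  using convex_cone[of "cone_over W"] cone_cone_over[of W] by (auto simp: cone_def)

lemma closed_cone_over:
  assumes "closed W" shows "closed (cone_over W)"
proof -
  have "open (- {0} \<inter> sgn -` (- W))"
    using assms by (intro continuous_open_preimage continuous_intros) auto
  moreover have "cone_over W = - (- {0} \<inter> sgn -` (- W))" by (auto simp: cone_over_def)
  ultimately show ?thesis by (metis closed_Compl)
qed

lemma sgn_add_in_sarc:
  fixes x y :: "'a::euclidean_space"
  assumes "x \<noteq> 0" "y \<noteq> 0"
  shows "sgn (x + y) \<in> sarc (sgn x) (sgn y)"
proof -
  define l where "l = norm x + norm y"
  define t where "t = norm y / l"
  have l: "0 < l" using assms by (simp add: l_def add_pos_pos)
  have t: "0 \<le> t" "t \<le> 1" using l by (auto simp: t_def l_def)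
  have "(1 - t) *\<^sub>R sgn x + t *\<^sub>R sgn y = (1 / l) *\<^sub>R (x + y)"
    using assms l by (simp add: t_def l_def sgn_div_norm scaleR_add_right field_simps)
  then have "((1 - t) *\<^sub>R sgn x + t *\<^sub>R sgn y) /\<^sub>R norm ((1 - t) *\<^sub>R sgn x + t *\<^sub>R sgn y)
      = sgn ((1 / l) *\<^sub>R (x + y))"
    by (simp only: sgn_div_norm)
  also have "\<dots> = sgn (x + y)" using l by (simp add: sgn_scaleR_pos)
  finally have eq: "sgn (x + y) = ((1 - t) *\<^sub>R sgn x + t *\<^sub>R sgn y)
      /\<^sub>R norm ((1 - t) *\<^sub>R sgn x + t *\<^sub>R sgn y)" ..
  show ?thesis unfolding sarc_def using t eq by (intro CollectI exI[where x=t]) simp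
qed

lemma convex_cone_over:
  assumes "\<And>w1 w2. w1 \<in> W \<Longrightarrow> w2 \<in> W \<Longrightarrow> sarc w1 w2 \<subseteq> W"
  shows "convex (cone_over W)"
  unfolding convex_cone_over_iff
proof (intro ballI)
  fix x y assume "x \<in> cone_over W" "y \<in> cone_over W"
  then consider "x = 0" | "y = 0" | "x \<noteq> 0" "y \<noteq> 0" "sgn x \<in> W" "sgn y \<in> W"
    by (auto simp: cone_over_def)
  then show "x + y \<in> cone_over W"
  proof cases
    case 3
    then show ?thesis using sgn_add_in_sarc[of x y] assms by (auto simp: cone_over_def)
  qed (use \<open>x \<in> cone_over W\<close> \<open>y \<in> cone_over W\<close> in auto)
qed

lemma spolar_spolar_eq:
  assumes W: "W \<subseteq> sph" "closed W" and cv: "convex (cone_over W)"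
  shows "spolar (spolar W) = W"
proof
  show "W \<subseteq> spolar (spolar W)" by (rule subset_spolar_spolar[OF W(1)])
  show "spolar (spolar W) \<subseteq> W"
  proof
    fix X assume X: "X \<in> spolar (spolar W)"
    then have Xs: "X \<in> sph" by (simp add: spolar_iff)
    show "X \<in> W"
    proof (rule ccontr)
      assume "X \<notin> W"
      then have "X \<notin> cone_over W" using Xs by (auto simp: cone_over_def sgn_sph sph_def)
      then obtain a b where ab: "a \<bullet> X < b" "\<forall>k\<in>cone_over W. b < a \<bullet> k"
        using separating_hyperplane_closed_point[OF cv closed_cone_over[OF W(2)]] by blast
      have b: "b < 0" using ab(2) by (auto simp: cone_over_def)
      have "0 \<le> a \<bullet> w" if w: "w \<in> W" for w
      proof (rule ccontr)
        assume "\<not> 0 \<le> a \<bullet> w"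
        then have "0 < b / (a \<bullet> w)" using b by (simp add: divide_neg_neg)
        then have "(b / (a \<bullet> w)) *\<^sub>R w \<in> cone_over W"
          using w W(1) by (auto simp: cone_over_def sgn_scaleR_pos sgn_sph)
        then show False using ab(2) \<open>\<not> 0 \<le> a \<bullet> w\<close> by fastforce
      qed
      moreover have "a \<noteq> 0" using ab(1) b by auto
      ultimately have "sgn a \<in> spolar W"
        using sgn_in_sph[of a] by (simp add: spolar_iff sgn_div_norm inner_commute)
      then have "0 \<le> sgn a \<bullet> X" using X by (simp add: spolar_iff)
      then show False using ab(1) b \<open>a \<noteq> 0\<close> by (simp add: sgn_div_norm zero_le_mult_iff)
    qed
  qed
qed

subsection \<open>Wulff shapes\<close>

lemma HWulffD:
  assumes "W \<in> HWulff P"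
  shows "W \<subseteq> sph" "closed W" "W \<noteq> {}" "P \<in> W" "\<And>w. w \<in> W \<Longrightarrow> 0 < w \<bullet> P"
    "\<exists>e>0. {Q \<in> sph. sdist P Q < e} \<subseteq> W"
    "\<And>w1 w2. w1 \<in> W \<Longrightarrow> w2 \<in> W \<Longrightarrow> sarc w1 w2 \<subseteq> W"
  using assms by (auto simp: HWulff_def Hsets_def sinterior_pt_def sconvex_body_def sconvex_def
      hemi_def inner_commute not_le)

lemma HWulff_pointed_bipolar:
  assumes W: "W \<in> HWulff P" and P: "P \<in> sph"
  shows "W \<in> pointed_bipolar P"
proof -
  note F = HWulffD[OF W]
  have "spolar (spolar W) = W" by (rule spolar_spolar_eq[OF F(1,2) convex_cone_over[OF F(7)]])
  moreover have "P \<in> spolar W" using F(5) P by (auto simp: spolar_iff less_imp_le)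
  ultimately show ?thesis using F(1,4) by (simp add: pointed_bipolar_def)
qed

lemma inner_pos_spolar_interior:
  assumes P: "P \<in> sph" and e: "e > 0" "{R \<in> sph. sdist P R < e} \<subseteq> W" and Q: "Q \<in> spolar W"
  shows "0 < Q \<bullet> P"
proof (rule ccontr)
  assume "\<not> 0 < Q \<bullet> P"
  moreover have "P \<in> W" using e P inner_self_sph[OF P] by (auto simp: sdist_def)
  then have "0 \<le> P \<bullet> Q" using Q by (simp add: spolar_iff)
  ultimately have PQ: "P \<bullet> Q = 0" by (simp add: inner_commute)
  have Qs: "Q \<in> sph" using Q by (simp add: spolar_iff)
  define t where "t = min e 1 / 2"
  have t: "0 < t" "t < e" "t < pi" using e pi_gt3 by (auto simp: t_def)
  text \<open>Tilting P away from Q by the angle t leaves the polar of W.\<close>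
  define R where "R = cos t *\<^sub>R P - sin t *\<^sub>R Q"
  note unit = inner_self_sph[OF P] inner_self_sph[OF Qs]
  have "R \<bullet> R = (cos t)\<^sup>2 + (sin t)\<^sup>2"
    by (simp add: R_def inner_diff_left inner_diff_right unit PQ inner_commute power2_eq_square)
  then have Rs: "R \<in> sph" by (simp add: sph_def norm_eq_sqrt_inner)
  have "P \<bullet> R = cos t" by (simp add: R_def inner_diff_right unit PQ)
  then have "sdist P R = t" using t by (simp add: sdist_def arccos_cos)
  then have "R \<in> W" using e(2) Rs t by auto
  then have "0 \<le> R \<bullet> Q" using Q by (simp add: spolar_iff)
  moreover have "R \<bullet> Q = - sin t" by (simp add: R_def inner_diff_left unit PQ)
  moreover have "0 < sin t" using t by (intro sin_gt_zero) auto
  ultimately show False by simp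
qed

lemma sinterior_pt_spolar:
  assumes W: "W \<subseteq> sph" "closed W" "W \<noteq> {}" and P: "P \<in> sph"
    and pos: "\<And>w. w \<in> W \<Longrightarrow> 0 < w \<bullet> P"
  shows "sinterior_pt (spolar W) P"
proof -
  have "continuous_on W (\<lambda>w. w \<bullet> P)" by (intro continuous_intros)
  then obtain w0 where w0: "w0 \<in> W" "\<And>w. w \<in> W \<Longrightarrow> w0 \<bullet> P \<le> w \<bullet> P"
    using continuous_attains_inf[OF compact_sph_subset[OF W(1,2)] W(3)] by blast
  define m where "m = w0 \<bullet> P"
  have m: "0 < m" using pos[OF w0(1)] by (simp add: m_def)
  have "Q \<in> spolar W" if Q: "Q \<in> sph" "sdist P Q < m" for Q
  proof -
    have "norm (Q - P) < m" using norm_diff_le_sdist[OF Q(1) P] Q(2) by (simp add: sdist_commute)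
    have "0 \<le> w \<bullet> Q" if w: "w \<in> W" for w
    proof -
      have "\<bar>w \<bullet> (Q - P)\<bar> \<le> norm w * norm (Q - P)" by (rule Cauchy_Schwarz_ineq2)
      also have "\<dots> < m" using \<open>norm (Q - P) < m\<close> w W(1) by (auto simp: sph_def)
      finally show ?thesis using w0(2)[OF w] by (simp add: m_def inner_diff_right)
    qed
    then show ?thesis using Q(1) by (simp add: spolar_iff)
  qed
  moreover have "P \<in> spolar W" using pos P by (auto simp: spolar_iff less_imp_le)
  ultimately show ?thesis using m by (auto simp: sinterior_pt_def)
qed

lemma sarc_subset_spolar:
  assumes Q: "Q1 \<in> spolar W" "Q2 \<in> spolar W" and pos: "0 < Q1 \<bullet> P" "0 < Q2 \<bullet> P"
  shows "sarc Q1 Q2 \<subseteq> spolar W"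
proof
  fix y assume "y \<in> sarc Q1 Q2"
  then obtain t where t: "0 \<le> t" "t \<le> 1"
    and y: "y = ((1 - t) *\<^sub>R Q1 + t *\<^sub>R Q2) /\<^sub>R norm ((1 - t) *\<^sub>R Q1 + t *\<^sub>R Q2)"
    unfolding sarc_def by blast
  define v where "v = (1 - t) *\<^sub>R Q1 + t *\<^sub>R Q2"
  define m where "m = min (Q1 \<bullet> P) (Q2 \<bullet> P)"
  have "(1 - t) * m + t * m \<le> (1 - t) * (Q1 \<bullet> P) + t * (Q2 \<bullet> P)"
    using t by (intro add_mono mult_left_mono) (auto simp: m_def)
  moreover have "0 < m" using pos by (simp add: m_def)
  ultimately have "0 < v \<bullet> P" by (simp add: v_def inner_add_left algebra_simps)
  then have "v \<noteq> 0" by auto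
  have "0 \<le> w \<bullet> v" if "w \<in> W" for w
    using Q that t by (simp add: spolar_iff v_def inner_add_right)
  then show "y \<in> spolar W"
    using sgn_in_sph[OF \<open>v \<noteq> 0\<close>] by (simp add: spolar_iff y sgn_div_norm flip: v_def)
qed

lemma spolar_HWulff:
  assumes W: "W \<in> HWulff P" and P: "P \<in> sph"
  shows "spolar W \<in> HWulff P"
proof -
  note F = HWulffD[OF W]
  have pos: "0 < Q \<bullet> P" if "Q \<in> spolar W" for Q
    using F(6) inner_pos_spolar_interior[OF P _ _ that] by blast
  have "spolar W \<inter> hemi (- P) = {}"
    using pos by (force simp: hemi_def inner_commute)
  moreover have "sinterior_pt (spolar W) P" by (rule sinterior_pt_spolar[OF F(1-3) P F(5)])
  moreover have "sarc Q1 Q2 \<subseteq> spolar W" if "Q1 \<in> spolar W" "Q2 \<in> spolar W" for Q1 Q2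
    using sarc_subset_spolar that pos by blast
  moreover have "- P \<in> sph" using P by (simp add: sph_def)
  ultimately show ?thesis
    using spolar_subset_sph[of W] closed_spolar[of W]
    by (auto simp: HWulff_def Hsets_def sconvex_body_def sconvex_def hemispherical_def
        sinterior_pt_def)
qed

subsection \<open>The closure of the Wulff shapes\<close>

lemma HWulff_closure_approx:
  assumes "W \<in> HWulff_closure P" "e > 0"
  obtains V where "V \<in> HWulff P" "\<forall>x\<in>W. \<exists>y\<in>V. sdist x y < e" "\<forall>y\<in>V. \<exists>x\<in>W. sdist x y < e"
proof -
  obtain V where V: "V \<in> HWulff P" "hdist W V < e"
    using assms by (auto simp: HWulff_closure_def)
  have "W \<subseteq> sph" "W \<noteq> {}" using assms(1) by (auto simp: HWulff_closure_def Hsets_def)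
  then show ?thesis
    using hdist_less_imp[OF _ HWulffD(1)[OF V(1)] _ HWulffD(3)[OF V(1)] V(2)] V(1) that by blast
qed

lemma cone_over_approx:
  assumes W: "W \<subseteq> sph" and V: "V \<subseteq> sph"
    and near: "\<forall>w\<in>W. \<exists>v\<in>V. sdist w v < e" and x: "x \<in> cone_over W"
  shows "\<exists>x'\<in>cone_over V. norm (x' - x) \<le> e * norm x"
proof (cases "x = 0")
  case False
  then obtain v where v: "v \<in> V" "sdist (sgn x) v < e"
    using x near by (auto simp: cone_over_def)
  have "norm (sgn x - v) < e"
    using norm_diff_le_sdist[OF sgn_in_sph[OF False], of v] v V by auto
  moreover have "norm x *\<^sub>R v - x = norm x *\<^sub>R (v - sgn x)"
    using False by (simp add: sgn_div_norm scaleR_diff_right)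
  then have "norm (norm x *\<^sub>R v - x) = norm x * norm (sgn x - v)"
    by (simp add: norm_minus_commute)
  moreover have "norm x *\<^sub>R v \<in> cone_over V"
    using False v V by (auto simp: cone_over_def sgn_scaleR_pos sgn_sph)
  ultimately show ?thesis
    by (metis less_imp_le mult.commute mult_left_mono norm_ge_zero)
qed (auto simp: cone_over_def)

lemma cone_over_add_approx:
  assumes W: "W \<subseteq> sph" and V: "V \<subseteq> sph" "convex (cone_over V)"
    and near: "\<forall>w\<in>W. \<exists>v\<in>V. sdist w v < e" and x: "x \<in> cone_over W" and y: "y \<in> cone_over W"
  shows "\<exists>z'\<in>cone_over V. norm (z' - (x + y)) \<le> e * (norm x + norm y)"
proof -
  obtain x' y' where x': "x' \<in> cone_over V" "norm (x' - x) \<le> e * norm x"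
    and y': "y' \<in> cone_over V" "norm (y' - y) \<le> e * norm y"
    using cone_over_approx[OF W V(1) near] x y by metis
  have "norm (x' + y' - (x + y)) \<le> norm (x' - x) + norm (y' - y)"
    by (metis add_diff_add norm_triangle_ineq)
  also have "\<dots> \<le> e * (norm x + norm y)" using x'(2) y'(2) by (simp add: distrib_left)
  finally show ?thesis using V(2) x'(1) y'(1) by (auto simp: convex_cone_over_iff)
qed

text \<open>Hausdorff limits of sets with convex cones have convex cones: by continuity of sgn at
  x + y \<noteq> 0, approximating x and y in the cones of nearby sets places sgn (x + y) in the closure
  of W.\<close>

lemma convex_cone_over_limit:
  assumes W: "W \<subseteq> sph" "closed W"
    and approx: "\<And>d. d > 0 \<Longrightarrow> \<exists>V. V \<subseteq> sph \<and> convex (cone_over V)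
      \<and> (\<forall>x\<in>W. \<exists>y\<in>V. sdist x y < d) \<and> (\<forall>y\<in>V. \<exists>x\<in>W. sdist x y < d)"
  shows "convex (cone_over W)"
  unfolding convex_cone_over_iff
proof (intro ballI)
  fix x y assume x: "x \<in> cone_over W" and y: "y \<in> cone_over W"
  define z where "z = x + y"
  define M where "M = norm x + norm y"
  show "x + y \<in> cone_over W"
  proof (cases "z = 0")
    case False
    have "\<exists>w\<in>W. dist w (sgn z) < e" if e: "e > 0" for e
    proof -
      obtain \<delta> where \<delta>: "\<delta> > 0" "\<And>z'. dist z' z < \<delta> \<Longrightarrow> dist (sgn z') (sgn z) < e/2"
        using isCont_sgn[OF continuous_ident False] e
        unfolding continuous_at_eps_delta by (metis half_gt_zero)
      define d where "d = min (e/2) (min \<delta> (norm z) / (M + 1))"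
      have d: "0 < d" "d \<le> e/2" "d * M < min \<delta> (norm z)"
      proof -
        have M: "0 < M + 1" by (simp add: M_def add_nonneg_pos)
        then show "0 < d" using e \<delta>(1) False by (simp add: d_def)
        show "d \<le> e/2" unfolding d_def by (rule min.cobounded1)
        have "d \<le> min \<delta> (norm z) / (M + 1)" unfolding d_def by (rule min.cobounded2)
        then have "d * (M + 1) \<le> min \<delta> (norm z)" using M by (simp add: pos_le_divide_eq)
        then show "d * M < min \<delta> (norm z)" using \<open>0 < d\<close> by (simp add: distrib_left)
      qed
      obtain V where V: "V \<subseteq> sph" "convex (cone_over V)"
        "\<forall>x\<in>W. \<exists>y\<in>V. sdist x y < d" "\<forall>y\<in>V. \<exists>x\<in>W. sdist x y < d"
        using approx[OF d(1)] by blast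
      obtain z' where z': "z' \<in> cone_over V" "norm (z' - z) \<le> d * M"
        using cone_over_add_approx[OF W(1) V(1,2,3) x y] by (auto simp: z_def M_def)
      then have close: "norm (z' - z) < min \<delta> (norm z)" using d(3) by linarith
      then have "z' \<noteq> 0" by auto
      then obtain w where w: "w \<in> W" "sdist w (sgn z') < d"
        using z'(1) V(4) by (auto simp: cone_over_def)
      have "dist w (sgn z') < e/2"
        using norm_diff_le_sdist[of w "sgn z'"] w W(1) sgn_in_sph[OF \<open>z' \<noteq> 0\<close>] d(2)
        by (auto simp: dist_norm)
      moreover have "dist (sgn z') (sgn z) < e/2" using close \<delta>(2) by (simp add: dist_norm)
      ultimately have "dist w (sgn z) < e" using dist_triangle[of w "sgn z" "sgn z'"] by linarith
      then show ?thesis using w(1) by blast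
    qed
    then have "sgn z \<in> W" using closed_approachable[OF W(2)] by blast
    then show ?thesis by (simp add: cone_over_def z_def)
  qed (simp add: cone_over_def z_def)
qed

lemma HWulff_closureD:
  assumes "W \<in> HWulff_closure P"
  shows "W \<subseteq> sph" "closed W"
  using assms by (simp_all add: HWulff_closure_def Hsets_def)

lemma pole_in_HWulff_closure:
  assumes W: "W \<in> HWulff_closure P" and P: "P \<in> sph"
  shows "P \<in> W"
proof -
  have "\<exists>x\<in>W. dist x P < e" if "e > 0" for e
  proof -
    obtain V where V: "V \<in> HWulff P" "\<forall>x\<in>W. \<exists>y\<in>V. sdist x y < e"
      "\<forall>y\<in>V. \<exists>x\<in>W. sdist x y < e"
      by (rule HWulff_closure_approx[OF W \<open>e > 0\<close>])
    obtain x where x: "x \<in> W" "sdist x P < e" using V(3) HWulffD(4)[OF V(1)] by blast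
    have "x \<in> sph" using HWulff_closureD(1)[OF W] x(1) by (rule subsetD)
    then have "norm (x - P) \<le> sdist x P" using P by (rule norm_diff_le_sdist)
    then have "dist x P < e" using x(2) by (simp add: dist_norm)
    then show ?thesis using x(1) by blast
  qed
  then show ?thesis using closed_approachable[OF HWulff_closureD(2)[OF W]] by blast
qed

lemma HWulff_closure_inner_nonneg:
  assumes W: "W \<in> HWulff_closure P" and P: "P \<in> sph" and w: "w \<in> W"
  shows "0 \<le> w \<bullet> P"
proof (rule ccontr)
  assume "\<not> 0 \<le> w \<bullet> P"
  then have "0 < - (w \<bullet> P)" by simp
  then obtain V where V: "V \<in> HWulff P" "\<forall>x\<in>W. \<exists>y\<in>V. sdist x y < - (w \<bullet> P)"
    "\<forall>y\<in>V. \<exists>x\<in>W. sdist x y < - (w \<bullet> P)"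
    by (rule HWulff_closure_approx[OF W])
  obtain v where v: "v \<in> V" "sdist w v < - (w \<bullet> P)" using V(2) w by blast
  have "w \<in> sph" using HWulff_closureD(1)[OF W] w by (rule subsetD)
  moreover have "v \<in> sph" using HWulffD(1)[OF V(1)] v(1) by (rule subsetD)
  ultimately have "norm (w - v) < - (w \<bullet> P)" using norm_diff_le_sdist[of w v] v(2) by simp
  moreover have "\<bar>(w - v) \<bullet> P\<bar> \<le> norm (w - v)"
    using Cauchy_Schwarz_ineq2[of "w - v" P] P by (simp add: sph_def)
  moreover have "0 < v \<bullet> P" using HWulffD(5)[OF V(1) v(1)] .
  ultimately show False by (simp add: inner_diff_left)
qed

lemma convex_cone_over_HWulff_closure:
  assumes W: "W \<in> HWulff_closure P"
  shows "convex (cone_over W)"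
proof (rule convex_cone_over_limit)
  show "W \<subseteq> sph" "closed W" using HWulff_closureD[OF W] .
  fix d :: real assume "d > 0"
  then obtain V where V: "V \<in> HWulff P"
    "\<forall>x\<in>W. \<exists>y\<in>V. sdist x y < d" "\<forall>y\<in>V. \<exists>x\<in>W. sdist x y < d"
    by (rule HWulff_closure_approx[OF W])
  then show "\<exists>V. V \<subseteq> sph \<and> convex (cone_over V)
      \<and> (\<forall>x\<in>W. \<exists>y\<in>V. sdist x y < d) \<and> (\<forall>y\<in>V. \<exists>x\<in>W. sdist x y < d)"
    using HWulffD(1)[OF V(1)] convex_cone_over[OF HWulffD(7)[OF V(1)]] by blast
qed

lemma HWulff_closure_pointed_bipolar:
  assumes W: "W \<in> HWulff_closure P" and P: "P \<in> sph"
  shows "W \<in> pointed_bipolar P"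
proof -
  note Ws = HWulff_closureD[OF W]
  have "P \<in> spolar W" using HWulff_closure_inner_nonneg[OF W P] P by (simp add: spolar_iff)
  moreover have "spolar (spolar W) = W"
    using Ws spolar_spolar_eq convex_cone_over_HWulff_closure[OF W] by blast
  ultimately show ?thesis using Ws pole_in_HWulff_closure[OF W P] by (simp add: pointed_bipolar_def)
qed

lemma spolar_HWulff_closure:
  assumes W: "W \<in> HWulff_closure P" and P: "P \<in> sph"
  shows "spolar W \<in> HWulff_closure P"
proof -
  have G: "W \<in> pointed_bipolar P" by (rule HWulff_closure_pointed_bipolar[OF W P])
  have "\<exists>V\<in>HWulff P. hdist (spolar W) V < e" if "e > 0" for e
  proof -
    obtain V where V: "V \<in> HWulff P" "hdist W V < e"
      using W \<open>e > 0\<close> by (auto simp: HWulff_closure_def)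
    then have "hdist (spolar W) (spolar V) < e"
      using hdist_spolar[OF G HWulff_pointed_bipolar[OF V(1) P]] by simp
    then show ?thesis using spolar_HWulff[OF V(1) P] by blast
  qed
  moreover have "spolar W \<in> Hsets"
    using G by (auto simp: pointed_bipolar_def Hsets_def spolar_subset_sph closed_spolar)
  ultimately show ?thesis by (simp add: HWulff_closure_def)
qed

theorem theorem1:
  fixes P :: "'a::euclidean_space"
  assumes "DIM('a) \<ge> 2"
    and "P \<in> sph"
  shows "bij_betw spolar (HWulff P) (HWulff P)
         \<and> (\<forall>W1\<in>HWulff P. \<forall>W2\<in>HWulff P. hdist (spolar W1) (spolar W2) = hdist W1 W2)
         \<and> bij_betw spolar (HWulff_closure P) (HWulff_closure P)
         \<and> (\<forall>W1\<in>HWulff_closure P. \<forall>W2\<in>HWulff_closure P.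
               hdist (spolar W1) (spolar W2) = hdist W1 W2)"
proof -
  have Wulff: "HWulff P \<subseteq> pointed_bipolar P"
    using HWulff_pointed_bipolar assms(2) by blast
  have closure: "HWulff_closure P \<subseteq> pointed_bipolar P"
    using HWulff_closure_pointed_bipolar assms(2) by blast
  show ?thesis
    using bij_betw_spolar[OF Wulff spolar_HWulff[OF _ assms(2)]]
      bij_betw_spolar[OF closure spolar_HWulff_closure[OF _ assms(2)]]
      hdist_spolar Wulff closure
    by blast
qed

end
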